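(* Let $G$ be a very well-covered graph with $V(G)=\{x_1,\ldots,x_h,y_1,\ldots,y_h\}$ such that $\{x_1,\ldots,x_h\}$ is a minimal vertex cover, $\{y_1,\ldots,y_h\}$ is a maximal independent set, and $\{x_i,y_i\}\in E(G)$ for all $i$. Let $s\ge1$, let $e_1,\ldots,e_s\in E(G)$ and let $G'$ be the graph associated to $(I(G)^{s+1}:e_1\cdots e_s)$ as described in the context. Let $i,j,k$ be distinct and $t_i\in\{x_i,y_i\}$. If $\{t_i,x_j\}\in E(G')$ and $\{y_j,x_k\}\in E(G')$, then $\{t_i,x_k\}\in E(G')$ or $\{t_i,y_j\}\in E(G')$.
   Context: $I(G)=(uv\mid\{u,v\}\in E(G))$ is the edge ideal; edges are identified with the products of their endpoints. $G$ is very well-covered if it has no isolated vertices, all minimal vertex covers have the same size, and this size is $|V(G)|/2$. Even-connection: vertices $u,v$ (possibly equal) are even-connected with respect to $e_1\cdots e_s$ if there is a sequence $p_0p_1\cdots p_{2k+1}$, $k\ge1$, of vertices with $p_0=u$, $p_{2k+1}=v$, $\{p_r,p_{r+1}\}\in E(G)$ for all $0\le r\le 2k$, each $\{p_{2\ell+1},p_{2\ell+2}\}$ ($0\le\ell\le k-1$) equal to some $e_m$, and each edge appearing among the $\{p_{2\ell+1},p_{2\ell+2}\}$ at most as many times as it appears in the list $e_1,\dots,e_s$. It is known that $(I(G)^{s+1}:e_1\cdots e_s)$ is minimally generated by the monomials $uv$ with $\{u,v\}\in E(G)$ or $u,v$ even-connected with respect to $e_1\cdots e_s$. Its polarization replaces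 each generator $u^2$ by $u\,u^*$ with a new variable $u^*$; $G'$ is the graph (on $V(G)$ together with the new vertices $u^*$) whose edge ideal is this polarization. Thus for $u\ne v$ in $V(G)$, $\{u,v\}\in E(G')$ iff $\{u,v\}\in E(G)$ or $u,v$ are even-connected. *)

theory Defs
  imports Main "HOL-Library.Multiset"
begin

definition simple_graph :: "'a set \<Rightarrow> 'a set set \<Rightarrow> bool" where
  "simple_graph V E \<longleftrightarrow> finite V \<and>
     (\<forall>e\<in>E. \<exists>a b. a \<in> V \<and> b \<in> V \<and> a \<noteq> b \<and> e = {a, b})"

definition vertex_cover :: "'a set \<Rightarrow> 'a set set \<Rightarrow> 'a set \<Rightarrow> bool" where
  "vertex_cover V E C \<longleftrightarrow> C \<subseteq> V \<and> (\<forall>e\<in>E. e \<inter> C \<noteq> {})"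

definition minimal_vertex_cover :: "'a set \<Rightarrow> 'a set set \<Rightarrow> 'a set \<Rightarrow> bool" where
  "minimal_vertex_cover V E C \<longleftrightarrow> vertex_cover V E C \<and>
     (\<forall>D. D \<subset> C \<longrightarrow> \<not> vertex_cover V E D)"

definition independent_set :: "'a set \<Rightarrow> 'a set set \<Rightarrow> 'a set \<Rightarrow> bool" where
  "independent_set V E S \<longleftrightarrow> S \<subseteq> V \<and> (\<forall>e\<in>E. \<not> e \<subseteq> S)"

definition maximal_independent_set :: "'a set \<Rightarrow> 'a set set \<Rightarrow> 'a set \<Rightarrow> bool" where
  "maximal_independent_set V E S \<longleftrightarrow> independent_set V E S \<and>
     (\<forall>T. S \<subset> T \<longrightarrow> \<not> independent_set V E T)"

definition very_well_covered :: "'a set \<Rightarrow> 'a set set \<Rightarrow> bool" where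
  "very_well_covered V E \<longleftrightarrow>
     (\<forall>v\<in>V. \<exists>e\<in>E. v \<in> e) \<and>
     (\<forall>C. minimal_vertex_cover V E C \<longrightarrow> 2 * card C = card V)"

text \<open>u, v even-connected w.r.t. the product e_1 ... e_s (given as the list es):
  a walk p_0 ... p_{2k+1}, k \<ge> 1, whose odd steps p_{2l+1} p_{2l+2} are edges from es,
  each used at most as often as it occurs in es.\<close>
definition even_connected :: "'a set set \<Rightarrow> 'a set list \<Rightarrow> 'a \<Rightarrow> 'a \<Rightarrow> bool" where
  "even_connected E es u v \<longleftrightarrow>
     (\<exists>p k. k \<ge> 1 \<and> length p = 2 * k + 2 \<and> p ! 0 = u \<and> p ! (2 * k + 1) = v \<and>
        (\<forall>r < 2 * k + 1. {p ! r, p ! (r + 1)} \<in> E) \<and>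
        (\<forall>l < k. {p ! (2 * l + 1), p ! (2 * l + 2)} \<in> set es) \<and>
        (\<forall>e. count (mset (map (\<lambda>l. {p ! (2 * l + 1), p ! (2 * l + 2)}) [0..<k])) e
               \<le> count (mset es) e))"

definition edge_G' :: "'a set set \<Rightarrow> 'a set list \<Rightarrow> 'a \<Rightarrow> 'a \<Rightarrow> bool" where
  "edge_G' E es u v \<longleftrightarrow> u \<noteq> v \<and> ({u, v} \<in> E \<or> even_connected E es u v)"

end

theory Submission
  imports Defs
begin

text \<open>
  An edge of G' is a walk whose odd-position steps use the edges of es (within multiplicity);
  a plain edge of G is such a walk with no odd-position steps. In a very well-covered graph,
  if {z, x_j} and {y_j, w} are edges then so is {z, w}, because every maximal independent
  set contains x_j or y_j. Hence the last vertex before x_j on the walk from t to x_j is adjacent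
  to the vertex after y_j on the walk from y_j to x_k, and the two walks can be joined through
  this edge into a walk from t to x_k. If they share an odd-position edge, this would overuse
  it; cutting both walks at the first shared edge instead yields a walk from t to x_k, or to
  y_j when the second walk traverses that edge in the opposite direction.
\<close>

section \<open>Walks with odd steps drawn from a list of edges\<close>

lemma mset_take_subseteq: "mset (take a xs) \<subseteq># mset xs"
  by (metis append_take_drop_id mset_append mset_subset_eq_add_left)

lemma mset_drop_subseteq: "mset (drop a xs) \<subseteq># mset xs"
  by (metis append_take_drop_id mset_append mset_subset_eq_add_right)

lemma mset_append_subseteq_if_disjoint:
  assumes "mset xs \<subseteq># M" "mset ys \<subseteq># M" "set xs \<inter> set ys = {}"
  shows "mset (xs @ ys) \<subseteq># M"
proof (rule mset_subset_eqI)
  fix a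
  have "count (mset xs) a \<le> count M a" "count (mset ys) a \<le> count M a"
    using assms(1,2) by (simp_all add: mset_subset_eq_count)
  moreover have "count (mset xs) a = 0 \<or> count (mset ys) a = 0"
    using assms(3) by (simp only: count_mset_0_iff) blast
  ultimately show "count (mset (xs @ ys)) a \<le> count M a"
    by (simp only: mset_append count_union) linarith
qed

definition odd_edges :: "(nat \<Rightarrow> 'a) \<Rightarrow> nat \<Rightarrow> 'a set list" where
  "odd_edges f m = map (\<lambda>l. {f (2*l+1), f (2*l+2)}) [0..<m]"

text \<open>The walk f 0, \<dots>, f (2*m+1) plays the role of p_0 \<dots> p_{2k+1} in the definition of
  even-connection, except that m = 0 (a single edge of G) is allowed.\<close>
definition alt_walk :: "'a set set \<Rightarrow> 'a set list \<Rightarrow> (nat \<Rightarrow> 'a) \<Rightarrow> nat \<Rightarrow> bool" where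
  "alt_walk E es f m \<longleftrightarrow>
     (\<forall>r<2*m+1. {f r, f (Suc r)} \<in> E) \<and> mset (odd_edges f m) \<subseteq># mset es"

lemma length_odd_edges [simp]: "length (odd_edges f m) = m"
  by (simp add: odd_edges_def)

lemma nth_odd_edges [simp]: "l < m \<Longrightarrow> odd_edges f m ! l = {f (2*l+1), f (2*l+2)}"
  by (simp add: odd_edges_def)

lemma even_connected_iff_alt_walk:
  "even_connected E es u v \<longleftrightarrow>
     (\<exists>f m. 1 \<le> m \<and> alt_walk E es f m \<and> f 0 = u \<and> f (2*m+1) = v)"
proof
  assume "even_connected E es u v"
  then obtain p m where p: "1 \<le> m" "p ! 0 = u" "p ! (2*m+1) = v"
      "\<forall>r < 2*m+1. {p ! r, p ! (r + 1)} \<in> E"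
      "\<forall>e. count (mset (map (\<lambda>l. {p ! (2*l+1), p ! (2*l+2)}) [0..<m])) e \<le> count (mset es) e"
    unfolding even_connected_def by blast
  then have "alt_walk E es ((!) p) m"
    by (simp add: alt_walk_def odd_edges_def subseteq_mset_def)
  with p(1-3) show "\<exists>f m. 1 \<le> m \<and> alt_walk E es f m \<and> f 0 = u \<and> f (2*m+1) = v"
    by blast
next
  assume "\<exists>f m. 1 \<le> m \<and> alt_walk E es f m \<and> f 0 = u \<and> f (2*m+1) = v"
  then obtain f m where f: "1 \<le> m" "alt_walk E es f m" "f 0 = u" "f (2*m+1) = v"
    by blast
  let ?p = "map f [0..<2*m+2]"
  have odd: "map (\<lambda>l. {?p ! (2*l+1), ?p ! (2*l+2)}) [0..<m] = odd_edges f m"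
    by (auto simp: odd_edges_def simp del: upt_Suc)
  have sub: "mset (odd_edges f m) \<subseteq># mset es"
    using f(2) by (simp add: alt_walk_def)
  then have "set (odd_edges f m) \<subseteq> set es"
    by (metis set_mset_mono set_mset_mset)
  then have "\<forall>l<m. {?p ! (2*l+1), ?p ! (2*l+2)} \<in> set es"
    using nth_mem[of _ "odd_edges f m"] by (auto simp del: upt_Suc)
  with f odd sub show "even_connected E es u v"
    unfolding even_connected_def
    by (intro exI[of _ ?p] exI[of _ m])
       (auto simp: alt_walk_def subseteq_mset_def nth_Cons' simp del: upt_Suc)
qed

lemma alt_walk_0_iff: "alt_walk E es f 0 \<longleftrightarrow> {f 0, f 1} \<in> E"
  by (simp add: alt_walk_def odd_edges_def)

lemma edge_G'_iff_alt_walk: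
  "edge_G' E es u v \<longleftrightarrow>
     u \<noteq> v \<and> (\<exists>f m. alt_walk E es f m \<and> f 0 = u \<and> f (2*m+1) = v)"
proof -
  have "{u, v} \<in> E \<longleftrightarrow> (\<exists>f. alt_walk E es f 0 \<and> f 0 = u \<and> f 1 = v)"
    by (auto simp: alt_walk_0_iff intro: exI[of _ "\<lambda>r. if r = 0 then u else v"])
  then show ?thesis
    unfolding edge_G'_def even_connected_iff_alt_walk
    by (metis One_nat_def Suc_leI add_0 mult_0_right neq0_conv)
qed

lemma alt_walk_edge: "alt_walk E es f m \<Longrightarrow> r < 2*m+1 \<Longrightarrow> {f r, f (Suc r)} \<in> E"
  by (simp add: alt_walk_def)

lemma alt_walk_odd_edges: "alt_walk E es f m \<Longrightarrow> mset (odd_edges f m) \<subseteq># mset es"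
  by (simp add: alt_walk_def)

lemma odd_edges_reverse:
  "odd_edges (\<lambda>r. f (2*m+1 - r)) m = rev (odd_edges f m)"
proof (rule nth_equalityI)
  fix l assume "l < length (odd_edges (\<lambda>r. f (2*m+1 - r)) m)"
  then have l: "l < m" by simp
  have "2*m+1 - (2*l+1) = 2*(m - Suc l) + 2" "2*m+1 - (2*l+2) = 2*(m - Suc l) + 1"
    using l by auto
  then show "odd_edges (\<lambda>r. f (2*m+1 - r)) m ! l = rev (odd_edges f m) ! l"
    using l by (simp add: rev_nth insert_commute)
qed simp

lemma alt_walk_reverse:
  assumes "alt_walk E es f m"
  shows "alt_walk E es (\<lambda>r. f (2*m+1 - r)) m"
  unfolding alt_walk_def
proof
  show "\<forall>r<2*m+1. {f (2*m+1 - r), f (2*m+1 - Suc r)} \<in> E"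
  proof (intro allI impI)
    fix r assume "r < 2*m+1"
    then have "2*m+1 - r = Suc (2*m - r)" "2*m+1 - Suc r = 2*m - r" by auto
    moreover have "{f (2*m - r), f (Suc (2*m - r))} \<in> E"
      using assms by (rule alt_walk_edge) simp
    ultimately show "{f (2*m+1 - r), f (2*m+1 - Suc r)} \<in> E"
      by (simp only: insert_commute)
  qed
  show "mset (odd_edges (\<lambda>r. f (2*m+1 - r)) m) \<subseteq># mset es"
    unfolding odd_edges_reverse mset_rev by (rule alt_walk_odd_edges[OF assms])
qed

lemma alt_walk_join:
  assumes f: "alt_walk E es f m" and g: "alt_walk E es g n" and ab: "a \<le> m" "b \<le> n"
    and link: "{f (2*a), g (2*b+1)} \<in> E"
    and disj: "set (take a (odd_edges f m)) \<inter> set (drop b (odd_edges g n)) = {}"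
  shows "\<exists>w. alt_walk E es w (a + (n - b)) \<and> w 0 = f 0 \<and> w (2*(a + (n - b))+1) = g (2*n+1)"
proof (intro exI conjI)
  define w where "w r = (if r \<le> 2*a then f r else g (r - 2*a + 2*b))" for r
  have "\<not> Suc (2*(a + n - b)) \<le> 2*a" "Suc (2*(a + n - b) + 2*b) - 2*a = Suc (2*n)"
    using ab by simp_all
  then show "w 0 = f 0" and "w (2*(a + (n - b))+1) = g (2*n+1)"
    using ab by (simp_all add: w_def)
  have edges: "{w r, w (Suc r)} \<in> E" if r: "r < 2*(a + (n - b))+1" for r
  proof -
    consider "r < 2*a" | "r = 2*a" | "2*a < r" by linarith
    then show ?thesis
    proof cases
      case 1
      then show ?thesis using alt_walk_edge[OF f, of r] ab by (simp add: w_def)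
    next
      case 2
      then show ?thesis using link by (simp add: w_def)
    next
      case 3
      then have "Suc r - 2*a + 2*b = Suc (r - 2*a + 2*b)" "r - 2*a + 2*b < 2*n+1"
        using r ab by auto
      then show ?thesis using alt_walk_edge[OF g, of "r - 2*a + 2*b"] 3 by (simp add: w_def)
    qed
  qed
  have "odd_edges w (a + (n - b)) = take a (odd_edges f m) @ drop b (odd_edges g n)"
    using ab by (intro nth_equalityI) (auto simp: w_def nth_append algebra_simps Suc_diff_le)
  moreover have "mset (take a (odd_edges f m)) \<subseteq># mset es"
    by (rule subset_mset.order_trans[OF mset_take_subseteq alt_walk_odd_edges[OF f]])
  moreover have "mset (drop b (odd_edges g n)) \<subseteq># mset es"
    by (rule subset_mset.order_trans[OF mset_drop_subseteq alt_walk_odd_edges[OF g]])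
  ultimately have "mset (odd_edges w (a + (n - b))) \<subseteq># mset es"
    using disj by (simp only: mset_append_subseteq_if_disjoint)
  with edges show "alt_walk E es w (a + (n - b))"
    by (simp add: alt_walk_def)
qed

lemma alt_walk_cut_at_shared_edge:
  assumes f: "alt_walk E es f m" and g: "alt_walk E es g n" and "a < m" "b < n"
    and shared: "{g (2*b+1), g (2*b+2)} = {f (2*a+1), f (2*a+2)}"
    and first: "set (take a (odd_edges f m)) \<inter> set (odd_edges g n) = {}"
  shows "\<exists>w p. alt_walk E es w p \<and> w 0 = f 0 \<and> w (2*p+1) \<in> {g 0, g (2*n+1)}"
proof -
  have step: "{f (2*a), f (2*a+1)} \<in> E"
    using alt_walk_edge[OF f, of "2*a"] \<open>a < m\<close> by simp
  from shared consider "g (2*b+1) = f (2*a+1)" | "g (2*b+2) = f (2*a+1)"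
    by (auto simp: doubleton_eq_iff)
  then show ?thesis
  proof cases
    case 1
    have "set (take a (odd_edges f m)) \<inter> set (drop b (odd_edges g n)) = {}"
      using first set_drop_subset by fastforce
    then obtain w where "alt_walk E es w (a + (n - b))" "w 0 = f 0"
        "w (2*(a + (n - b))+1) = g (2*n+1)"
      using alt_walk_join[OF f g, of a b] \<open>a < m\<close> \<open>b < n\<close> step 1 by auto
    then show ?thesis by blast
  next
    case 2
    define g' where "g' = (\<lambda>r. g (2*n+1 - r))"
    have g': "alt_walk E es g' n"
      unfolding g'_def by (rule alt_walk_reverse[OF g])
    have "2*n - 2*(n - Suc b) = 2*b+2"
      using \<open>b < n\<close> by simp
    with 2 have "g' (2*(n - Suc b)+1) = f (2*a+1)"
      by (simp add: g'_def)
    moreover have "set (take a (odd_edges f m)) \<inter> set (drop (n - Suc b) (odd_edges g' n)) = {}"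
      using first set_drop_subset unfolding g'_def odd_edges_reverse by fastforce
    ultimately obtain w where "alt_walk E es w (a + (n - (n - Suc b)))" "w 0 = f 0"
        "w (2*(a + (n - (n - Suc b)))+1) = g' (2*n+1)"
      using alt_walk_join[OF f g', of a "n - Suc b"] \<open>a < m\<close> step by auto
    then show ?thesis by (auto simp: g'_def)
  qed
qed

lemma alt_walk_splice:
  assumes f: "alt_walk E es f m" and g: "alt_walk E es g n" and link: "{f (2*m), g 1} \<in> E"
  shows "\<exists>w p. alt_walk E es w p \<and> w 0 = f 0 \<and> w (2*p+1) \<in> {g 0, g (2*n+1)}"
proof (cases "\<exists>a<m. odd_edges f m ! a \<in> set (odd_edges g n)")
  case False
  then have "set (take m (odd_edges f m)) \<inter> set (drop 0 (odd_edges g n)) = {}"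
    by (auto simp: in_set_conv_nth)
  then obtain w where "alt_walk E es w (m + (n - 0))" "w 0 = f 0"
      "w (2*(m + (n - 0))+1) = g (2*n+1)"
    using alt_walk_join[OF f g order_refl le0] link by auto
  then show ?thesis by blast
next
  case True
  then obtain a where a: "a < m" "odd_edges f m ! a \<in> set (odd_edges g n)"
    "\<forall>a'<a. odd_edges f m ! a' \<notin> set (odd_edges g n)"
    using exists_least_iff[of "\<lambda>a. a < m \<and> odd_edges f m ! a \<in> set (odd_edges g n)"]
    by (metis less_trans)
  then have "set (take a (odd_edges f m)) \<inter> set (odd_edges g n) = {}"
    by (auto simp: in_set_conv_nth)
  moreover from a obtain b where "b < n" "{g (2*b+1), g (2*b+2)} = {f (2*a+1), f (2*a+2)}"
    by (auto simp: in_set_conv_nth)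
  ultimately show ?thesis
    by (intro alt_walk_cut_at_shared_edge[OF f g \<open>a < m\<close>])
qed

section \<open>Very well-covered graphs\<close>

lemma simple_graph_edgeE:
  assumes "simple_graph V E" "e \<in> E"
  obtains a b where "a \<in> V" "b \<in> V" "a \<noteq> b" "e = {a, b}"
  using assms unfolding simple_graph_def by blast

lemma simple_graph_edge_subset: "simple_graph V E \<Longrightarrow> e \<in> E \<Longrightarrow> e \<subseteq> V"
  by (erule simple_graph_edgeE) auto

lemma independent_set_extends_to_maximal:
  assumes "finite V" "independent_set V E T"
  obtains S where "T \<subseteq> S" "maximal_independent_set V E S"
proof -
  let ?F = "{S. independent_set V E S}"
  have "?F \<subseteq> Pow V"
    by (auto simp: independent_set_def)
  then have "finite ?F"
    using assms(1) by (simp add: finite_subset)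
  then obtain S where "S \<in> ?F" "T \<subseteq> S" and max: "\<forall>S'\<in>?F. S \<subseteq> S' \<longrightarrow> S = S'"
    using finite_has_maximal2[of ?F T] assms(2) by auto
  moreover have "\<not> independent_set V E S'" if "S \<subset> S'" for S'
    using max that by blast
  ultimately show ?thesis
    using that unfolding maximal_independent_set_def by simp
qed

lemma minimal_vertex_cover_complement:
  assumes G: "simple_graph V E" and S: "maximal_independent_set V E S"
  shows "minimal_vertex_cover V E (V - S)"
proof -
  have SV: "S \<subseteq> V" and indep: "\<forall>e\<in>E. \<not> e \<subseteq> S"
    using S by (auto simp: maximal_independent_set_def independent_set_def)
  have "\<not> vertex_cover V E D" if D: "D \<subset> V - S" for D
  proof
    assume cover: "vertex_cover V E D"
    obtain v where v: "v \<in> V - S" "v \<notin> D"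
      using D by blast
    have "\<not> e \<subseteq> insert v S" if "e \<in> E" for e
    proof
      assume "e \<subseteq> insert v S"
      moreover obtain u where "u \<in> e" "u \<in> D"
        using cover \<open>e \<in> E\<close> unfolding vertex_cover_def by blast
      ultimately show False
        using D v by blast
    qed
    then have "independent_set V E (insert v S)"
      using SV v unfolding independent_set_def by blast
    moreover have "S \<subset> insert v S"
      using v by blast
    ultimately show False
      using S unfolding maximal_independent_set_def by blast
  qed
  moreover have "vertex_cover V E (V - S)"
    using indep simple_graph_edge_subset[OF G] unfolding vertex_cover_def by blast
  ultimately show ?thesis
    unfolding minimal_vertex_cover_def by blast
qed

lemma card_maximal_independent_set:
  assumes G: "simple_graph V E" and "very_well_covered V E"
    and S: "maximal_independent_set V E S"
  shows "2 * card S = card V"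
proof -
  have "2 * card (V - S) = card V"
    using assms minimal_vertex_cover_complement[OF G S] unfolding very_well_covered_def by blast
  moreover have "S \<subseteq> V" "finite V"
    using S G by (auto simp: maximal_independent_set_def independent_set_def simple_graph_def)
  moreover have "card (V - S) = card V - card S" "card S \<le> card V"
    using \<open>S \<subseteq> V\<close> \<open>finite V\<close> by (simp_all add: card_Diff_subset finite_subset card_mono)
  ultimately show ?thesis
    by linarith
qed

locale paired_very_well_covered =
  fixes V :: "'a set" and E :: "'a set set" and x y :: "nat \<Rightarrow> 'a" and h :: nat
  assumes simple: "simple_graph V E" and vwc: "very_well_covered V E"
    and vertices: "V = x ` {1..h} \<union> y ` {1..h}"
    and inj_x: "inj_on x {1..h}" and inj_y: "inj_on y {1..h}"
    and disjoint: "x ` {1..h} \<inter> y ` {1..h} = {}"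
    and pair_edge: "\<forall>l\<in>{1..h}. {x l, y l} \<in> E"
begin

lemma card_vertices: "card V = 2 * h"
  using inj_x inj_y disjoint by (simp add: vertices card_Un_disjoint card_image)

lemma maximal_independent_set_meets_pair:
  assumes S: "maximal_independent_set V E S" and l: "l \<in> {1..h}"
  shows "x l \<in> S \<or> y l \<in> S"
proof (rule ccontr)
  assume avoids: "\<not> (x l \<in> S \<or> y l \<in> S)"
  have SV: "S \<subseteq> V" and indep: "\<forall>e\<in>E. \<not> e \<subseteq> S"
    using S by (auto simp: maximal_independent_set_def independent_set_def)
  have "card S = h"
    using card_maximal_independent_set[OF simple vwc S] card_vertices by simp
  have "S \<subseteq> (\<Union>l'\<in>{1..h} - {l}. S \<inter> {x l', y l'})"
  proof
    fix v assume "v \<in> S"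
    then obtain l' where "l' \<in> {1..h}" "v = x l' \<or> v = y l'"
      using SV unfolding vertices by blast
    moreover have "l' \<noteq> l"
      using avoids \<open>v \<in> S\<close> calculation(2) by blast
    ultimately show "v \<in> (\<Union>l'\<in>{1..h} - {l}. S \<inter> {x l', y l'})"
      using \<open>v \<in> S\<close> by blast
  qed
  then have "card S \<le> card (\<Union>l'\<in>{1..h} - {l}. S \<inter> {x l', y l'})"
    by (intro card_mono) auto
  also have "\<dots> \<le> (\<Sum>l'\<in>{1..h} - {l}. card (S \<inter> {x l', y l'}))"
    by (rule card_UN_le) simp
  also have "\<dots> \<le> (\<Sum>l'\<in>{1..h} - {l}. 1)"
  proof (rule sum_mono)
    fix l' assume "l' \<in> {1..h} - {l}"
    then have "\<not> {x l', y l'} \<subseteq> S"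
      using indep pair_edge by blast
    then obtain a where "S \<inter> {x l', y l'} \<subseteq> {a}"
      by blast
    then show "card (S \<inter> {x l', y l'}) \<le> 1"
      using card_mono[of "{a}"] by simp
  qed
  also have "\<dots> = h - 1"
    using l by simp
  finally show False
    using \<open>card S = h\<close> l by simp
qed

lemma edge_across_pair:
  assumes l: "l \<in> {1..h}" and zx: "{z, x l} \<in> E" and yw: "{y l, w} \<in> E"
  shows "{z, w} \<in> E"
proof (rule ccontr)
  assume non_edge: "{z, w} \<notin> E"
  have "\<not> e \<subseteq> {z, w}" if "e \<in> E" for e
  proof
    assume "e \<subseteq> {z, w}"
    moreover obtain a b where "a \<noteq> b" "e = {a, b}"
      using simple_graph_edgeE[OF simple \<open>e \<in> E\<close>] by blast
    ultimately have "e = {z, w}"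
      by (auto simp: doubleton_eq_iff)
    with non_edge \<open>e \<in> E\<close> show False
      by simp
  qed
  moreover have "{z, w} \<subseteq> V"
    using simple_graph_edge_subset[OF simple zx] simple_graph_edge_subset[OF simple yw] by simp
  ultimately have "independent_set V E {z, w}"
    unfolding independent_set_def by blast
  moreover have "finite V"
    using simple by (simp add: simple_graph_def)
  ultimately obtain S where S: "{z, w} \<subseteq> S" "maximal_independent_set V E S"
    by (metis independent_set_extends_to_maximal)
  then have "\<not> {z, x l} \<subseteq> S" "\<not> {y l, w} \<subseteq> S"
    using zx yw unfolding maximal_independent_set_def independent_set_def by blast+
  with S maximal_independent_set_meets_pair[OF S(2) l] show False
    by blast
qed

end

theorem lemma4p2:
  fixes V :: "'a set" and E :: "'a set set" and x y :: "nat \<Rightarrow> 'a"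
    and h s i j k :: nat and es :: "'a set list" and t :: 'a
  assumes "simple_graph V E"
    and "very_well_covered V E"
    and "V = x ` {1..h} \<union> y ` {1..h}"
    and "inj_on x {1..h}" and "inj_on y {1..h}" and "x ` {1..h} \<inter> y ` {1..h} = {}"
    and "minimal_vertex_cover V E (x ` {1..h})"
    and "maximal_independent_set V E (y ` {1..h})"
    and "\<forall>l\<in>{1..h}. {x l, y l} \<in> E"
    and "s \<ge> 1" and "length es = s" and "set es \<subseteq> E"
    and "i \<in> {1..h}" and "j \<in> {1..h}" and "k \<in> {1..h}"
    and "i \<noteq> j" and "j \<noteq> k" and "i \<noteq> k"
    and "t \<in> {x i, y i}"
    and "edge_G' E es t (x j)" and "edge_G' E es (y j) (x k)"
  shows "edge_G' E es t (x k) \<or> edge_G' E es t (y j)"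
proof -
  interpret paired_very_well_covered V E x y h
    using assms(1-6,9) by unfold_locales
  obtain f m where f: "alt_walk E es f m" "f 0 = t" "f (2*m+1) = x j"
    using assms(20) by (auto simp: edge_G'_iff_alt_walk)
  obtain g n where g: "alt_walk E es g n" "g 0 = y j" "g (2*n+1) = x k"
    using assms(21) by (auto simp: edge_G'_iff_alt_walk)
  have "{f (2*m), g 1} \<in> E"
  proof (rule edge_across_pair[OF \<open>j \<in> {1..h}\<close>])
    show "{f (2*m), x j} \<in> E"
      using alt_walk_edge[OF f(1), of "2*m"] f(3) by simp
    show "{y j, g 1} \<in> E"
      using alt_walk_edge[OF g(1), of 0] g(2) by simp
  qed
  then obtain w p where w: "alt_walk E es w p" "w 0 = t" "w (2*p+1) \<in> {y j, x k}"
    using alt_walk_splice[OF f(1) g(1)] unfolding f(2) g(2,3) by blast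
  have "x i \<noteq> x k" "y i \<noteq> y j"
    using inj_onD[OF inj_x, of i k] inj_onD[OF inj_y, of i j] assms(13-16,18) by auto
  moreover have "x i \<noteq> y j" "y i \<noteq> x k"
    using disjoint assms(13-15) by blast+
  ultimately have "t \<noteq> x k" "t \<noteq> y j"
    using \<open>t \<in> {x i, y i}\<close> by auto
  with w show ?thesis
    by (auto simp: edge_G'_iff_alt_walk)
qed

end
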